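(* Let $V=\mathbb{F}_2^s$ and let $\circ$ and $\diamond$ be two alternative operations on $V$ with $\dim W_\circ=\dim W_\diamond=s-3$, with translation groups $T_\circ$ and $T_\diamond$. Then there exists $g\in\mathrm{GL}(V)$ such that $T_\diamond=T_\circ^g$ if and only if $\dim U_\circ=\dim U_\diamond$.
   Context: An alternative operation on $V$ is defined from an elementary abelian $2$-subgroup $T<\mathrm{AGL}(V,+)$ acting regularly on $V$: with $\tau_a$ the unique element of $T$ sending $0$ to $a$ (postfix notation), $a\circ b:=a\tau_b$, and $T_\circ:=T$. It is assumed that the xor-translations $x\mapsto x+a$ lie in the normaliser of $T$ in $\mathrm{Sym}(V)$. The weak key space is $W_\circ=\{k: x\circ k=x+k\ \forall x\}$; the product is $a\cdot b=a+b+a\circ b$ and the error space is $U_\circ=\{a\cdot b: a,b\in V\}$. For $g\in\mathrm{GL}(V)$, $T^g:=gTg^{-1}$. *)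

theory Defs
  imports "HOL-Analysis.Analysis" "HOL-Library.Z2"
begin

text \<open>Permutations are functions V \<Rightarrow> V; the paper writes them postfix, so the postfix
product s t (first s, then t) is the function t \<circ> s.\<close>

type_synonym 's V = "bit ^ 's"

definition GL :: "('s::finite V \<Rightarrow> 's V) set" where
  "GL = {g. Vector_Spaces.linear (*s) (*s) g \<and> bij g}"

definition AGL :: "('s::finite V \<Rightarrow> 's V) set" where
  "AGL = {f. \<exists>L c. L \<in> GL \<and> f = (\<lambda>x. L x + c)}"

definition xor_tr :: "'s::finite V \<Rightarrow> 's V \<Rightarrow> 's V" where
  "xor_tr a = (\<lambda>x. x + a)"

definition translation_group :: "('s::finite V \<Rightarrow> 's V) set \<Rightarrow> bool" where
  "translation_group T \<longleftrightarrow>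
     T \<subseteq> AGL \<and> id \<in> T \<and>
     (\<forall>t\<in>T. \<forall>u\<in>T. t \<circ> u \<in> T) \<and>
     (\<forall>t\<in>T. inv t \<in> T) \<and>
     (\<forall>t\<in>T. \<forall>u\<in>T. t \<circ> u = u \<circ> t) \<and>
     (\<forall>t\<in>T. t \<circ> t = id) \<and>
     (\<forall>a b. \<exists>!t. t \<in> T \<and> t a = b) \<and>
     (\<forall>a. (\<lambda>t. xor_tr a \<circ> t \<circ> inv (xor_tr a)) ` T = T)"

definition tau :: "('s::finite V \<Rightarrow> 's V) set \<Rightarrow> 's V \<Rightarrow> ('s V \<Rightarrow> 's V)" where
  "tau T a = (THE t. t \<in> T \<and> t 0 = a)"

definition circ_op :: "('s::finite V \<Rightarrow> 's V) set \<Rightarrow> 's V \<Rightarrow> 's V \<Rightarrow> 's V" where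
  "circ_op T a b = tau T b a"

definition weak_keys :: "('s::finite V \<Rightarrow> 's V) set \<Rightarrow> 's V set" where
  "weak_keys T = {k. \<forall>x. circ_op T x k = x + k}"

definition dot_op :: "('s::finite V \<Rightarrow> 's V) set \<Rightarrow> 's V \<Rightarrow> 's V \<Rightarrow> 's V" where
  "dot_op T a b = a + b + circ_op T a b"

definition error_space :: "('s::finite V \<Rightarrow> 's V) set \<Rightarrow> 's V set" where
  "error_space T = {dot_op T a b | a b. True}"

text \<open>T^g := g T g^{-1} in postfix notation, i.e. x \<mapsto> (x g) t g^{-1}.\<close>
definition conj_grp :: "('s::finite V \<Rightarrow> 's V) \<Rightarrow> ('s V \<Rightarrow> 's V) set \<Rightarrow> ('s V \<Rightarrow> 's V) set" where
  "conj_grp g T = (\<lambda>t. inv g \<circ> t \<circ> g) ` T"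

end

theory Submission
  imports Defs
begin

(*
  The product a \<cdot> b = a + b + a \<circ> b of a translation group T is biadditive, alternating and
  satisfies x \<cdot> (a \<cdot> b) = 0; its radical is the weak key space W and its products span U.
  Since tau_b x = x + b + x \<cdot> b, the group is determined by its product, so T2 = T1^g exactly
  when g is an isomorphism of the two products.

  When W has codimension 3, choose x, y, z spanning V modulo W. Either some such frame has
  x \<cdot> y = 0, and then x \<cdot> z and y \<cdot> z are independent, or the three products of a given frame
  are independent: over F_2 a linear relation among them is one of seven, and each yields a
  sheared frame with x \<cdot> y = 0. Extending these products to a basis of W gives a
  basis of V whose structure constants depend only on r = dim U, which is 2 or 3; the linear map
  matching two such bases is the required g.
*)

lemma bit_smult: "(c::bit) *s v = (if c = 0 then 0 else v)"
  by (cases c) auto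

lemma bit_vec_add_self [simp]: "(v::bit^'n) + v = 0"
  by (simp add: vec_eq_iff)

lemma bit_vec_two [simp]: "(2::bit^'n) = 0"
  by (simp add: vec_eq_iff)

lemma bit_vec_add_eq_0_iff [simp]: "(v::bit^'n) + w = 0 \<longleftrightarrow> v = w"
  by (metis add.assoc add_0 bit_vec_add_self)

lemma bit_vec_diff_eq_add [simp]: "(v::bit^'n) - w = v + w"
  by (simp add: vec_eq_iff)

lemma bit_vec_add_cancel_left [simp]: "(v::bit^'n) + (v + w) = w"
  by (simp add: add.assoc[symmetric])

lemma bit_vec_add_eq_iff: "(u::bit^'n) + v = w \<longleftrightarrow> u + w = v"
  by (metis bit_vec_add_cancel_left)

lemma linear_bit_iff_additive:
  "Vector_Spaces.linear (*s) (*s) (f :: bit^'m \<Rightarrow> bit^'n) \<longleftrightarrow> Modules.additive f"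
proof
  assume "Vector_Spaces.linear (*s) (*s) f"
  then show "Modules.additive f"
    by (simp add: Modules.additive_def Vector_Spaces.linear_iff)
next
  assume "Modules.additive f"
  then show "Vector_Spaces.linear (*s) (*s) f"
    by (simp add: Vector_Spaces.linear_iff Modules.additive_def bit_smult vec.vector_space_axioms
        additive.zero)
qed

lemma subspace_bit_iff:
  "vec.subspace (S :: (bit^'n) set) \<longleftrightarrow> 0 \<in> S \<and> (\<forall>x\<in>S. \<forall>y\<in>S. x + y \<in> S)"
  by (auto simp: vec.subspace_def bit_smult)

lemma ex_bit_iff: "(\<exists>k::bit. P k) \<longleftrightarrow> P 0 \<or> P 1"
  by (metis bit.exhaust)

lemma span_insert_bit:
  "x \<in> vec.span (insert a S) \<longleftrightarrow> x \<in> vec.span S \<or> x + a \<in> vec.span (S :: (bit^'n) set)"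
  unfolding vec.span_insert by (simp add: ex_bit_iff)

lemma span_singleton_bit: "vec.span {a :: bit^'n} = {0, a}"
  using span_insert_bit[of _ a "{}"] by auto

lemma independent_bit_pair:
  "a \<noteq> 0 \<Longrightarrow> b \<noteq> 0 \<Longrightarrow> a \<noteq> b \<Longrightarrow> vec.independent {a :: bit^'n, b}"
  by (simp add: vec.independent_insert span_singleton_bit)

lemma independent_bit_triple:
  assumes "a \<noteq> 0" "b \<noteq> 0" "c \<noteq> 0" "a \<noteq> b" "a \<noteq> c" "b \<noteq> c" "a + b \<noteq> c"
  shows "vec.independent {a :: bit^'n, b, c}"
proof -
  have "a \<notin> vec.span {b, c}"
    using assms by (auto simp: span_insert_bit span_singleton_bit add.commute)
  then show ?thesis
    using assms independent_bit_pair[of b c] by (simp add: vec.independent_insert)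
qed

lemma additive_on_span_in_subspace:
  fixes f :: "bit^'m \<Rightarrow> bit^'n"
  assumes "Modules.additive f" "vec.subspace S" "f ` B \<subseteq> S" "a \<in> vec.span B"
  shows "f a \<in> S"
proof -
  have "vec.subspace {a. f a \<in> S}"
    using assms(1,2) by (auto simp: subspace_bit_iff Modules.additive_def additive.zero)
  then show ?thesis
    using vec.span_induct[OF assms(4), of "\<lambda>a. f a \<in> S"] assms(3) by auto
qed

lemma biadditive_on_span_in_subspace:
  fixes f :: "bit^'m \<Rightarrow> bit^'n \<Rightarrow> bit^'k"
  assumes "\<And>b. Modules.additive (\<lambda>a. f a b)" "\<And>a. Modules.additive (f a)" "vec.subspace S"
    "\<And>u v. u \<in> A \<Longrightarrow> v \<in> B \<Longrightarrow> f u v \<in> S" "a \<in> vec.span A" "b \<in> vec.span B"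
  shows "f a b \<in> S"
proof -
  have "f u b \<in> S" if "u \<in> A" for u
    using additive_on_span_in_subspace[of "f u" S B b] assms that by auto
  then show ?thesis
    using additive_on_span_in_subspace[of "\<lambda>a. f a b" S A a] assms by auto
qed

lemma exists_spanning_extension:
  fixes S :: "('a::field^'n) set"
  assumes "vec.dim S + k = CARD('n)"
  obtains X where "card X = k" "vec.span (X \<union> S) = UNIV"
proof -
  obtain BS where BS: "BS \<subseteq> S" "vec.independent BS" "S \<subseteq> vec.span BS" "card BS = vec.dim S"
    using vec.basis_exists by blast
  define B where "B = vec.extend_basis BS"
  have "BS \<subseteq> B" "vec.independent B" "vec.span B = UNIV"
    unfolding B_def using vec.extend_basis_superset vec.independent_extend_basis
      vec.span_extend_basis BS(2) by blast+
  moreover from this have "card B = CARD('n)"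
    using vec.basis_card_eq_dim[of B UNIV] vec_dim_card by auto
  moreover have "finite BS"
    using BS(2) vec.finiteI_independent by blast
  ultimately have "card (B - BS) = k" "B \<subseteq> (B - BS) \<union> S"
    using assms BS card_Diff_subset[of BS B] by auto
  then show ?thesis
    using that[of "B - BS"] vec.span_mono \<open>vec.span B = UNIV\<close> by (metis top.extremum_uniqueI)
qed

lemma GL_linear: "g \<in> GL \<Longrightarrow> Vector_Spaces.linear (*s) (*s) g"
  and GL_bij: "g \<in> GL \<Longrightarrow> bij g"
  by (simp_all add: GL_def)

lemma GL_add: "g \<in> GL \<Longrightarrow> g (x + y) = g x + g y"
  and GL_zero: "g \<in> GL \<Longrightarrow> g 0 = 0"
  using GL_linear additive.add additive.zero linear_bit_iff_additive by blast+

lemma GL_inv_apply: "g \<in> GL \<Longrightarrow> inv g (g x) = x"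
  and GL_apply_inv: "g \<in> GL \<Longrightarrow> g (inv g y) = y"
  by (simp_all add: GL_def bij_def inv_f_f surj_f_inv_f)

lemma GL_map_basis:
  fixes es es' :: "(bit^'n) list"
  assumes "distinct es" "vec.independent (set es)" "vec.span (set es) = UNIV"
    and "distinct es'" "vec.independent (set es')" "vec.span (set es') = UNIV"
  obtains g where "g \<in> GL" "map g es = es'"
proof -
  have len: "length es = length es'"
    using assms vec.basis_card_eq_dim[of _ UNIV] vec_dim_card
    by (metis distinct_card equalityD2 subset_UNIV)
  define g where "g = vec.construct (set es) (\<lambda>v. the (map_of (zip es es') v))"
  have lin: "Vector_Spaces.linear (*s) (*s) g"
    unfolding g_def using assms(2) by (rule vec.linear_construct)
  have "g (es ! i) = es' ! i" if "i < length es" for i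
    unfolding g_def using that assms(1,2) len
    by (simp add: vec.construct_basis map_of_zip_nth)
  then have map: "map g es = es'"
    using len by (auto intro: nth_equalityI)
  interpret g: Vector_Spaces.linear "(*s)" "(*s)" g by (rule lin)
  have "UNIV = vec.span (set es')" using assms(6) by simp
  also have "\<dots> = g ` vec.span (set es)"
    using g.span_image by (metis map set_map)
  finally have "surj g" by auto
  moreover have "inj g"
    using vec.linear_surjective_imp_injective[OF lin \<open>surj g\<close>] by simp
  ultimately show ?thesis
    using that[of g] lin map by (simp add: GL_def bij_def)
qed

(* Structure constants for a basis list whose first three entries span V modulo the radical
   and whose remaining entries lie in it. *)
definition standard_product :: "nat \<Rightarrow> 'a list \<Rightarrow> nat \<Rightarrow> nat \<Rightarrow> 'a::zero" where
  "standard_product r es i j =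
     (if {i, j} = {0, 2} then es ! 3 else if {i, j} = {1, 2} then es ! 4
      else if {i, j} = {0, 1} \<and> r = 3 then es ! 5 else 0)"

lemma standard_product_map:
  assumes "f 0 = 0" "r + 3 \<le> length es" "2 \<le> r"
  shows "standard_product r (map f es) i j = f (standard_product r es i j)"
  using assms by (auto simp: standard_product_def doubleton_eq_iff)

lemma standard_product_mem:
  assumes "r + 3 \<le> length es" "2 \<le> r"
  shows "standard_product r es i j \<in> insert 0 (set (take r (drop 3 es)))"
proof -
  have "es ! (3 + k) \<in> set (take r (drop 3 es))" if "k < r" for k
    using assms that by (auto simp: in_set_conv_nth intro!: exI[of _ k])
  from this[of 0] this[of 1] this[of 2] show ?thesis
    using assms by (auto simp: standard_product_def doubleton_eq_iff)
qed

locale alt_nil2_product =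
  fixes dot :: "bit^'n::finite \<Rightarrow> bit^'n \<Rightarrow> bit^'n"
  assumes add_left: "dot (a + b) c = dot a c + dot b c"
    and commute: "dot a b = dot b a"
    and alternating [simp]: "dot a a = 0"
    and dot_dot [simp]: "dot c (dot a b) = 0"
begin

lemma add_right: "dot a (b + c) = dot a b + dot a c"
  using add_left commute by metis

lemma additive_left: "Modules.additive (\<lambda>a. dot a b)"
  and additive_right: "Modules.additive (dot a)"
  by (simp_all add: Modules.additive_def add_left add_right)

definition radical :: "(bit^'n) set" where
  "radical = {k. \<forall>x. dot x k = 0}"

lemma radical_dot_left: "k \<in> radical \<Longrightarrow> dot k x = 0"
  and radical_dot_right: "k \<in> radical \<Longrightarrow> dot x k = 0"
  using commute by (auto simp: radical_def)

lemma dot_in_radical: "dot a b \<in> radical"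
  by (simp add: radical_def)

lemma in_radical_if_annihilates_spanning:
  assumes "vec.span E = UNIV" "\<And>e. e \<in> E \<Longrightarrow> dot v e = 0"
  shows "v \<in> radical"
proof -
  have "dot v x \<in> {0}" for x
    using additive_on_span_in_subspace[OF additive_right, where S="{0}" and B=E and a=x] assms
    by (auto simp: subspace_bit_iff)
  then show ?thesis by (auto simp: radical_def commute)
qed

definition standard_basis :: "nat \<Rightarrow> (bit^'n) list \<Rightarrow> bool" where
  "standard_basis r es \<longleftrightarrow> r \<in> {2, 3} \<and> r + 3 \<le> length es \<and>
     distinct es \<and> vec.independent (set es) \<and> vec.span (set es) = UNIV \<and>
     (\<forall>i < length es. \<forall>j < length es. dot (es ! i) (es ! j) = standard_product r es i j)"

lemma standard_basis_products_subset:
  assumes "standard_basis r es"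
  shows "set (take r (drop 3 es)) \<subseteq> {dot a b | a b. True}"
proof -
  have r: "r \<in> {2, 3}" "r + 3 \<le> length es"
    and table: "\<And>i j. i < length es \<Longrightarrow> j < length es \<Longrightarrow>
      dot (es ! i) (es ! j) = standard_product r es i j"
    using assms unfolding standard_basis_def by blast+
  have "0 < length es" "1 < length es" "2 < length es"
    using r by auto
  then have "dot (es ! 0) (es ! 2) = es ! 3" "dot (es ! 1) (es ! 2) = es ! 4"
    "r = 3 \<Longrightarrow> dot (es ! 0) (es ! 1) = es ! 5"
    using table by (auto simp: standard_product_def doubleton_eq_iff)
  then have products: "es ! 3 \<in> {dot a b | a b. True}" "es ! 4 \<in> {dot a b | a b. True}"
    "r = 3 \<Longrightarrow> es ! 5 \<in> {dot a b | a b. True}"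
    by (metis (mono_tags, lifting) mem_Collect_eq)+
  have "es ! (3 + k) \<in> {dot a b | a b. True}" if "k < r" for k
  proof -
    from that r consider "k = 0" | "k = 1" | "k = 2" "r = 3" by force
    then show ?thesis using products by cases simp_all
  qed
  then show ?thesis
    by (auto simp: in_set_conv_nth)
qed

lemma products_subset_span_standard_basis:
  assumes "standard_basis r es"
  shows "{dot a b | a b. True} \<subseteq> vec.span (set (take r (drop 3 es)))"
proof clarify
  have r: "r \<in> {2, 3}" "r + 3 \<le> length es" and span: "vec.span (set es) = UNIV"
    and table: "\<And>i j. i < length es \<Longrightarrow> j < length es \<Longrightarrow>
      dot (es ! i) (es ! j) = standard_product r es i j"
    using assms unfolding standard_basis_def by blast+
  fix a b
  show "dot a b \<in> vec.span (set (take r (drop 3 es)))"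
  proof (rule biadditive_on_span_in_subspace[OF additive_left additive_right vec.subspace_span])
    fix u v assume "u \<in> set es" "v \<in> set es"
    then obtain i j where "i < length es" "j < length es" "u = es ! i" "v = es ! j"
      by (auto simp: in_set_conv_nth)
    then have "dot u v \<in> insert 0 (set (take r (drop 3 es)))"
      using table standard_product_mem[OF r(2)] r(1) by force
    then show "dot u v \<in> vec.span (set (take r (drop 3 es)))"
      using vec.span_zero vec.span_base by auto
  qed (simp_all add: span)
qed

lemma dim_products_standard_basis:
  assumes "standard_basis r es"
  shows "vec.dim {dot a b | a b. True} = r"
proof -
  let ?S = "set (take r (drop 3 es))"
  have "vec.span {dot a b | a b. True} = vec.span ?S"
    using standard_basis_products_subset[OF assms] products_subset_span_standard_basis[OF assms]
    by (simp add: vec.span_eq vec.span_superset subset_trans)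
  then have "vec.dim {dot a b | a b. True} = vec.dim ?S"
    by (rule vec.span_eq_dim)
  also have "\<dots> = card ?S"
  proof (rule vec.dim_eq_card_independent)
    have "?S \<subseteq> set es"
      using set_take_subset set_drop_subset by (rule subset_trans)
    then show "vec.independent ?S"
      using assms vec.independent_mono unfolding standard_basis_def by blast
  qed
  also have "\<dots> = r"
    using assms by (auto simp: standard_basis_def distinct_card)
  finally show ?thesis .
qed

end

lemma standard_bases_isomorphic:
  assumes d1: "alt_nil2_product d1" and d2: "alt_nil2_product d2"
    and es1: "alt_nil2_product.standard_basis d1 r es1"
    and es2: "alt_nil2_product.standard_basis d2 r es2"
  obtains g where "g \<in> GL" "\<And>a b. g (d2 a b) = d1 (g a) (g b)"
proof -
  interpret d1: alt_nil2_product d1 by (rule d1)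
  interpret d2: alt_nil2_product d2 by (rule d2)
  have table1: "\<And>i j. i < length es1 \<Longrightarrow> j < length es1 \<Longrightarrow>
      d1 (es1 ! i) (es1 ! j) = standard_product r es1 i j"
    and table2: "\<And>i j. i < length es2 \<Longrightarrow> j < length es2 \<Longrightarrow>
      d2 (es2 ! i) (es2 ! j) = standard_product r es2 i j"
    and r: "2 \<le> r" "r + 3 \<le> length es2"
    and span: "vec.span (set es2) = UNIV"
    using es1 es2 unfolding d1.standard_basis_def d2.standard_basis_def by auto
  obtain g where g: "g \<in> GL" and map: "map g es2 = es1"
    using GL_map_basis[of es2 es1] es1 es2
    unfolding d1.standard_basis_def d2.standard_basis_def by blast
  have "g (d2 u v) = d1 (g u) (g v)" if uv: "u \<in> set es2" "v \<in> set es2" for u v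
  proof -
    obtain i j where ij: "i < length es2" "j < length es2" "u = es2 ! i" "v = es2 ! j"
      using uv unfolding in_set_conv_nth by blast
    then have "g (d2 u v) = g (standard_product r es2 i j)"
      using table2 by simp
    also have "\<dots> = standard_product r es1 i j"
      using r GL_zero[OF g] standard_product_map[of g r es2] map by simp
    also have "\<dots> = d1 (g u) (g v)"
      using table1[of i j] ij map by auto
    finally show ?thesis .
  qed
  moreover have "Modules.additive (\<lambda>a. g (d2 a b) + d1 (g a) (g b))"
    "Modules.additive (\<lambda>b. g (d2 a b) + d1 (g a) (g b))" for a b
    by (simp_all add: Modules.additive_def d1.add_left d1.add_right d2.add_left d2.add_right
        GL_add[OF g] add_ac)
  ultimately have "g (d2 a b) + d1 (g a) (g b) \<in> {0}" for a b
    using biadditive_on_span_in_subspace[where f="\<lambda>a b. g (d2 a b) + d1 (g a) (g b)"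
        and A="set es2" and B="set es2" and S="{0}"] span
    by (simp add: subspace_bit_iff)
  then show ?thesis
    using that g by simp
qed

locale codim3_nil2_product = alt_nil2_product dot
  for dot :: "bit^'n::finite \<Rightarrow> bit^'n \<Rightarrow> bit^'n" +
  assumes dim_radical: "vec.dim radical + 3 = CARD('n)"
begin

definition frame :: "bit^'n \<Rightarrow> bit^'n \<Rightarrow> bit^'n \<Rightarrow> bool" where
  "frame x y z \<longleftrightarrow> vec.span ({x, y, z} \<union> radical) = UNIV"

lemma exists_frame:
  obtains x y z where "frame x y z"
proof -
  obtain X where "card X = 3" "vec.span (X \<union> radical) = UNIV"
    using exists_spanning_extension[OF dim_radical] .
  moreover from this obtain x y z where "X = {x, y, z}"
    unfolding card_3_iff by blast
  ultimately show ?thesis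
    using that unfolding frame_def by blast
qed

lemma frame_shear:
  assumes "frame x y z"
  shows "frame (x + y) y z"
proof -
  let ?S = "{x + y, y, z} \<union> radical"
  have "(x + y) + y \<in> vec.span ?S"
    by (intro vec.span_add vec.span_base) simp_all
  then have "{x, y, z} \<union> radical \<subseteq> vec.span ?S"
    by (auto simp: add.assoc vec.span_base)
  then have "vec.span ({x, y, z} \<union> radical) \<subseteq> vec.span ?S"
    by (rule vec.span_minimal[OF _ vec.subspace_span])
  then show ?thesis
    using assms unfolding frame_def by blast
qed

lemma frame_outside_span:
  assumes "frame x y z"
  shows "x \<notin> vec.span ({y, z} \<union> radical)"
proof
  assume "x \<in> vec.span ({y, z} \<union> radical)"
  then have "vec.span ({y, z} \<union> radical) = UNIV"
    using assms vec.span_redundant unfolding frame_def by (metis Un_insert_left)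
  then have "CARD('n) = vec.dim ({y, z} \<union> radical)"
    by (metis vec.dim_span vec_dim_card)
  also have "\<dots> \<le> vec.dim radical + 2"
    by (simp add: vec.dim_insert)
  finally show False
    using dim_radical by simp
qed

lemma frame_annihilator:
  assumes "frame x y z" "u \<in> vec.span ({y, z} \<union> radical)"
  shows "dot (x + u) x \<noteq> 0 \<or> dot (x + u) y \<noteq> 0 \<or> dot (x + u) z \<noteq> 0"
proof (rule ccontr)
  assume "\<not> ?thesis"
  then have "x + u \<in> radical"
    using assms(1) radical_dot_right unfolding frame_def
    by (intro in_radical_if_annihilates_spanning) auto
  then have "(x + u) + u \<in> vec.span ({y, z} \<union> radical)"
    using vec.span_add[OF vec.span_base assms(2)] by blast
  moreover have "(x + u) + u = x"
    by (simp add: add.assoc)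
  ultimately show False
    using frame_outside_span[OF assms(1)] by simp
qed

lemma isotropic_frame_products:
  assumes "frame x y z" "dot x y = 0"
  shows "dot x z \<noteq> 0" "dot y z \<noteq> 0" "dot x z \<noteq> dot y z"
proof -
  have "dot y x = 0"
    using assms(2) commute by simp
  moreover have "frame y x z"
    using assms(1) by (simp add: frame_def insert_commute)
  ultimately show "dot x z \<noteq> 0" "dot y z \<noteq> 0"
    using frame_annihilator[OF assms(1) vec.span_zero] frame_annihilator[of y x z 0]
      assms(2) vec.span_zero by auto
  have "dot (x + y) x = 0" "dot (x + y) y = 0" "dot (x + y) z = dot x z + dot y z"
    using assms(2) \<open>dot y x = 0\<close> by (simp_all add: add_left)
  moreover have "y \<in> vec.span ({y, z} \<union> radical)"
    by (simp add: vec.span_base)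
  ultimately show "dot x z \<noteq> dot y z"
    using frame_annihilator[OF assms(1)] by fastforce
qed

lemma frame_basis_extension:
  assumes frame: "frame x y z"
    and ps: "set ps \<subseteq> radical" "distinct ps" "vec.independent (set ps)"
  obtains qs where "set qs \<subseteq> radical" "distinct ([x, y, z] @ ps @ qs)"
    "vec.independent (set ([x, y, z] @ ps @ qs))" "vec.span (set ([x, y, z] @ ps @ qs)) = UNIV"
proof -
  obtain Q where Q: "set ps \<subseteq> Q" "Q \<subseteq> radical" "vec.independent Q" "radical \<subseteq> vec.span Q"
    using vec.maximal_independent_subset_extend[of "set ps" radical] ps by blast
  have "finite Q"
    using Q(3) vec.finiteI_independent by blast
  have card_Q: "card Q + 3 = CARD('n)"
    using vec.basis_card_eq_dim[OF Q(2) Q(4) Q(3)] dim_radical by simp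
  obtain qs where qs: "distinct qs" "set qs = Q - set ps"
    using finite_distinct_list[of "Q - set ps"] \<open>finite Q\<close> by blast
  define es where "es = [x, y, z] @ ps @ qs"
  have "length ps + length qs = card Q"
    using distinct_card[OF ps(2)] distinct_card[OF qs(1)] qs(2) card_Diff_subset[OF _ Q(1)]
      card_mono[OF \<open>finite Q\<close> Q(1)] by simp
  then have len: "length es = CARD('n)"
    using card_Q by (simp add: es_def)
  have "set es = {x, y, z} \<union> Q"
    using Q(1) qs(2) by (auto simp: es_def)
  then have "{x, y, z} \<union> radical \<subseteq> vec.span (set es)"
    using Q(4) vec.span_mono[of Q "set es"] vec.span_base[of _ "set es"] by blast
  then have span: "vec.span (set es) = UNIV"
    using frame vec.span_minimal[OF _ vec.subspace_span] unfolding frame_def by blast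
  then have "CARD('n) \<le> card (set es)"
    using vec.span_card_ge_dim[of "set es" UNIV] by (simp add: card_cart_basis)
  then have distinct: "distinct es"
    using card_length[of es] len by (simp add: card_distinct)
  have "vec.independent (set es)"
    using vec.card_le_dim_spanning[of "set es" UNIV] span len distinct_card[OF distinct]
    by (simp add: card_cart_basis)
  moreover have "set qs \<subseteq> radical"
    using qs(2) Q(2) by blast
  ultimately show ?thesis
    using that distinct span unfolding es_def by blast
qed

lemma standard_basis_from_frame:
  assumes frame: "frame x y z" and r: "r \<in> {2, 3}" and isotropic: "r = 2 \<Longrightarrow> dot x y = 0"
    and ps: "ps = take r [dot x z, dot y z, dot x y]" "distinct ps" "vec.independent (set ps)"
  shows "\<exists>es. standard_basis r es"
proof -
  have "set ps \<subseteq> radical"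
    using ps(1) set_take_subset[of r "[dot x z, dot y z, dot x y]"] dot_in_radical by auto
  then obtain qs where qs: "set qs \<subseteq> radical" and es: "distinct ([x, y, z] @ ps @ qs)"
    "vec.independent (set ([x, y, z] @ ps @ qs))" "vec.span (set ([x, y, z] @ ps @ qs)) = UNIV"
    using frame_basis_extension[OF frame _ ps(2,3)] by blast
  define es where "es = [x, y, z] @ ps @ qs"
  have radical_entries: "es ! k \<in> radical" if "3 \<le> k" "k < length es" for k
  proof -
    have "k = Suc (Suc (Suc (k - 3)))"
      using that(1) by simp
    then obtain m where "k = Suc (Suc (Suc m))" by blast
    then have "es ! k = (ps @ qs) ! m" "m < length (ps @ qs)"
      using that(2) by (simp_all add: es_def)
    then have "es ! k \<in> set (ps @ qs)"
      by (metis nth_mem)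
    then show ?thesis
      using qs \<open>set ps \<subseteq> radical\<close> by auto
  qed
  have "dot (es ! i) (es ! j) = standard_product r es i j"
    if "i < length es" "j < length es" for i j
  proof (cases "3 \<le> i \<or> 3 \<le> j")
    case True
    then have "dot (es ! i) (es ! j) = 0"
      using that radical_entries radical_dot_left radical_dot_right by blast
    moreover have "standard_product r es i j = 0"
      using True by (auto simp: standard_product_def doubleton_eq_iff)
    ultimately show ?thesis by simp
  next
    case False
    then have "i \<in> {0, 1, 2}" "j \<in> {0, 1, 2}"
      by auto
    moreover have "es ! 0 = x" "es ! 1 = y" "es ! 2 = z" "es ! 3 = dot x z" "es ! 4 = dot y z"
      "r = 3 \<Longrightarrow> es ! 5 = dot x y"
      using r ps(1) by (auto simp: es_def numeral_2_eq_2 numeral_3_eq_3)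
    ultimately show ?thesis
      using r isotropic commute[of y x] commute[of z x] commute[of z y]
      by (auto simp: standard_product_def doubleton_eq_iff)
  qed
  moreover have "r + 3 \<le> length es"
    using r ps(1) by (auto simp: es_def)
  ultimately show ?thesis
    using r es unfolding standard_basis_def es_def[symmetric] by blast
qed

lemma isotropic_frame_or_generic_products:
  assumes "frame e1 e2 e3"
  obtains (isotropic) x y z where "frame x y z" "dot x y = 0"
  | (generic) "dot e1 e2 \<noteq> 0" "dot e1 e3 \<noteq> 0" "dot e2 e3 \<noteq> 0"
      "dot e1 e2 \<noteq> dot e1 e3" "dot e1 e2 \<noteq> dot e2 e3" "dot e1 e3 \<noteq> dot e2 e3"
      "dot e1 e2 + dot e1 e3 \<noteq> dot e2 e3"
proof (cases "\<exists>x y z. frame x y z \<and> dot x y = 0")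
  case True
  then show ?thesis using isotropic by blast
next
  case False
  then have nonzero: "dot x y \<noteq> 0" if "frame x y z" for x y z
    using that by blast
  have "frame e1 e3 e2" "frame e2 e3 e1"
    using assms by (simp_all add: frame_def insert_commute)
  moreover have "frame e1 (e2 + e3) e2" "frame e2 (e1 + e3) e1" "frame e3 (e1 + e2) e1"
    using frame_shear[of e3 e2 e1] frame_shear[of e3 e1 e2] frame_shear[of e2 e1 e3] assms
    by (simp_all add: frame_def insert_commute add.commute)
  moreover have "frame (e1 + e3) (e2 + e3) e3"
    using frame_shear[of e2 e3 "e1 + e3"] frame_shear[of e1 e3 e2] assms
    by (simp add: frame_def insert_commute add.commute)
  moreover have "dot e1 (e2 + e3) = dot e1 e2 + dot e1 e3"
    "dot e2 (e1 + e3) = dot e1 e2 + dot e2 e3" "dot e3 (e1 + e2) = dot e1 e3 + dot e2 e3"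
    "dot (e1 + e3) (e2 + e3) = (dot e1 e2 + dot e1 e3) + dot e2 e3"
    using commute[of e2 e1] commute[of e3 e1] commute[of e3 e2]
    by (simp_all add: add_left add_right add_ac)
  ultimately show ?thesis
    using generic nonzero[OF assms] nonzero by (metis bit_vec_add_eq_0_iff)
qed

lemma exists_standard_basis: "\<exists>r es. standard_basis r es"
proof -
  obtain e1 e2 e3 where frame: "frame e1 e2 e3"
    by (rule exists_frame)
  then show ?thesis
  proof (cases rule: isotropic_frame_or_generic_products)
    case (isotropic x y z)
    then have "\<exists>es. standard_basis 2 es"
      using isotropic_frame_products[OF isotropic] independent_bit_pair
      by (intro standard_basis_from_frame[of x y z 2 "[dot x z, dot y z]"]) auto
    then show ?thesis by blast
  next
    case generic
    then have "\<exists>es. standard_basis 3 es"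
      using frame independent_bit_triple[of "dot e1 e3" "dot e2 e3" "dot e1 e2"]
      by (intro standard_basis_from_frame[of e1 e2 e3 3 "[dot e1 e3, dot e2 e3, dot e1 e2]"])
        (auto simp: bit_vec_add_eq_iff add.commute)
    then show ?thesis by blast
  qed
qed

end

lemma dim_products_eq_if_iso:
  fixes p q :: "bit^'n \<Rightarrow> bit^'n \<Rightarrow> bit^'n"
  assumes g: "g \<in> GL" and iso: "\<And>a b. g (q a b) = p (g a) (g b)"
  shows "vec.dim {p a b | a b. True} = vec.dim {q a b | a b. True}"
proof -
  have "p a b = g (q (inv g a) (inv g b))" for a b
    using iso GL_apply_inv[OF g] by simp
  then have "{p a b | a b. True} = g ` {q a b | a b. True}"
    using iso by blast
  moreover have "inj_on g (vec.span {q a b | a b. True})"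
    using bij_is_inj[OF GL_bij[OF g]] by (rule inj_on_subset) simp
  ultimately show ?thesis
    using vec.dim_image_eq[OF GL_linear[OF g]] by simp
qed

lemma codim3_products_isomorphic_iff:
  assumes p: "codim3_nil2_product p" and q: "codim3_nil2_product q"
  shows "(\<exists>g\<in>GL. \<forall>a b. g (q a b) = p (g a) (g b)) \<longleftrightarrow>
    vec.dim {p a b | a b. True} = vec.dim {q a b | a b. True}"
proof
  assume "\<exists>g\<in>GL. \<forall>a b. g (q a b) = p (g a) (g b)"
  then show "vec.dim {p a b | a b. True} = vec.dim {q a b | a b. True}"
    using dim_products_eq_if_iso by blast
next
  interpret p: codim3_nil2_product p by (rule p)
  interpret q: codim3_nil2_product q by (rule q)
  obtain r r' es es' where es: "p.standard_basis r es" and es': "q.standard_basis r' es'"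
    using p.exists_standard_basis q.exists_standard_basis by blast
  assume "vec.dim {p a b | a b. True} = vec.dim {q a b | a b. True}"
  then have "q.standard_basis r es'"
    using es' p.dim_products_standard_basis[OF es] q.dim_products_standard_basis[OF es'] by simp
  then obtain g where "g \<in> GL" "\<And>a b. g (q a b) = p (g a) (g b)"
    using standard_bases_isomorphic[OF p.alt_nil2_product_axioms q.alt_nil2_product_axioms es]
    by blast
  then show "\<exists>g\<in>GL. \<forall>a b. g (q a b) = p (g a) (g b)"
    by blast
qed

lemma translation_groupD:
  assumes "translation_group T"
  shows "T \<subseteq> AGL" "\<And>t u. t \<in> T \<Longrightarrow> u \<in> T \<Longrightarrow> t \<circ> u = u \<circ> t"
    "\<And>t. t \<in> T \<Longrightarrow> t \<circ> t = id" "\<exists>!t. t \<in> T \<and> t a = b"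
    "(\<lambda>t. xor_tr c \<circ> t \<circ> inv (xor_tr c)) ` T = T"
  using assms unfolding translation_group_def by simp_all

lemma tau_mem: "translation_group T \<Longrightarrow> tau T b \<in> T"
  and tau_zero: "translation_group T \<Longrightarrow> tau T b 0 = b"
  using theI'[OF translation_groupD(4)[of T 0 b]] unfolding tau_def by blast+

lemma tau_eqI: "translation_group T \<Longrightarrow> t \<in> T \<Longrightarrow> tau T (t 0) = t"
  unfolding tau_def by (rule the1_equality[OF translation_groupD(4)]) simp_all

lemma range_tau:
  assumes "translation_group T"
  shows "range (tau T) = T"
proof
  show "range (tau T) \<subseteq> T"
    using tau_mem[OF assms] by auto
  show "T \<subseteq> range (tau T)"
    using tau_eqI[OF assms] by (metis range_eqI subsetI)
qed

lemma tau_eq_dot_op: "tau T b x = x + b + dot_op T x b"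
  unfolding dot_op_def circ_op_def by (simp add: add.assoc)

lemma dot_op_add_left:
  assumes T: "translation_group T"
  shows "dot_op T (a + b) c = dot_op T a c + dot_op T b c"
proof -
  obtain L k where L: "L \<in> GL" and tau: "tau T c = (\<lambda>x. L x + k)"
    using translation_groupD(1)[OF T] tau_mem[OF T, of c] unfolding AGL_def by blast
  then have "k = c"
    using tau_zero[OF T, of c] GL_zero[OF L] by simp
  then have "dot_op T x c = x + L x" for x
    using tau_eq_dot_op[of T c x] tau by (simp add: add.assoc bit_vec_add_eq_iff)
  then show ?thesis
    using GL_add[OF L] by (simp add: add_ac)
qed

lemma dot_op_commute:
  assumes T: "translation_group T"
  shows "dot_op T a b = dot_op T b a"
proof -
  have "tau T a (tau T b 0) = tau T b (tau T a 0)"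
    using translation_groupD(2)[OF T tau_mem[OF T] tau_mem[OF T]] by (metis comp_apply)
  then show ?thesis
    using tau_zero[OF T] unfolding tau_eq_dot_op by (simp add: add.commute)
qed

lemma dot_op_self:
  assumes T: "translation_group T"
  shows "dot_op T a a = 0"
proof -
  have "tau T a (tau T a 0) = 0"
    using translation_groupD(3)[OF T tau_mem[OF T]] by (metis comp_apply id_apply)
  then show ?thesis
    using tau_zero[OF T] unfolding tau_eq_dot_op by simp
qed

lemma inv_xor_tr: "inv (xor_tr c) = xor_tr (c :: bit^'n)"
  by (rule inv_unique_comp) (auto simp: xor_tr_def add.assoc)

(* Conjugating tau a by the xor-translation by c gives the element of T sending 0 to
   a + c \<cdot> a; evaluating both sides at x shows that x \<cdot> (c \<cdot> a) = 0. *)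
lemma dot_op_dot_op:
  assumes T: "translation_group T"
  shows "dot_op T x (dot_op T c a) = 0"
proof -
  let ?d = "dot_op T"
  define f where "f = xor_tr c \<circ> tau T a \<circ> inv (xor_tr c)"
  have "f \<in> T"
    using translation_groupD(5)[OF T, of c] tau_mem[OF T, of a] unfolding f_def by blast
  then have "tau T (f 0) x = f x"
    using tau_eqI[OF T] by simp
  moreover have f: "f y = tau T a (y + c) + c" for y
    unfolding f_def inv_xor_tr by (simp add: xor_tr_def)
  ultimately have "tau T a (x + c) + c = tau T (tau T a c + c) x"
    by simp
  moreover have "tau T a c + c = a + ?d c a"
    unfolding tau_eq_dot_op by (simp add: add_ac)
  ultimately have "(x + c) + a + ?d (x + c) a + c = x + (a + ?d c a) + ?d x (a + ?d c a)"
    unfolding tau_eq_dot_op by simp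
  moreover have "?d u (v + w) = ?d u v + ?d u w" for u v w
    using dot_op_add_left[OF T] dot_op_commute[OF T] by metis
  ultimately show ?thesis
    by (simp add: dot_op_add_left[OF T] add_ac)
qed

lemma alt_nil2_product_dot_op:
  assumes "translation_group T"
  shows "alt_nil2_product (dot_op T)"
  by unfold_locales (rule assms[THEN dot_op_add_left] assms[THEN dot_op_commute]
      assms[THEN dot_op_self] assms[THEN dot_op_dot_op])+

lemma weak_keys_eq_radical:
  assumes "translation_group T"
  shows "weak_keys T = alt_nil2_product.radical (dot_op T)"
  unfolding weak_keys_def circ_op_def tau_eq_dot_op
    alt_nil2_product.radical_def[OF alt_nil2_product_dot_op[OF assms]]
  by (simp add: add.assoc)

lemma conj_grp_eq_iff_tau:
  assumes T1: "translation_group T1" and T2: "translation_group T2" and g: "g \<in> GL"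
  shows "T2 = conj_grp g T1 \<longleftrightarrow> (\<forall>b. inv g \<circ> tau T1 (g b) \<circ> g = tau T2 b)"
proof
  assume T2_eq: "T2 = conj_grp g T1"
  show "\<forall>b. inv g \<circ> tau T1 (g b) \<circ> g = tau T2 b"
  proof
    fix b
    let ?t = "inv g \<circ> tau T1 (g b) \<circ> g"
    have "?t \<in> T2"
      using T2_eq tau_mem[OF T1] unfolding conj_grp_def by blast
    moreover have "?t 0 = b"
      using GL_zero[OF g] GL_inv_apply[OF g] tau_zero[OF T1] by simp
    ultimately show "?t = tau T2 b"
      using tau_eqI[OF T2, of ?t] by simp
  qed
next
  assume tau: "\<forall>b. inv g \<circ> tau T1 (g b) \<circ> g = tau T2 b"
  have "conj_grp g T1 = (\<lambda>t. inv g \<circ> t \<circ> g) ` tau T1 ` range g"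
    using GL_bij[OF g] range_tau[OF T1] by (simp add: conj_grp_def bij_def)
  also have "\<dots> = range (tau T2)"
    using tau by (simp add: image_image)
  finally show "T2 = conj_grp g T1"
    using range_tau[OF T2] by simp
qed

lemma conj_grp_iff_iso:
  assumes T1: "translation_group T1" and T2: "translation_group T2" and g: "g \<in> GL"
  shows "T2 = conj_grp g T1 \<longleftrightarrow> (\<forall>a b. g (dot_op T2 a b) = dot_op T1 (g a) (g b))"
proof -
  have "inv g \<circ> tau T1 (g b) \<circ> g = tau T2 b \<longleftrightarrow> (\<forall>a. tau T1 (g b) (g a) = g (tau T2 b a))" for b
    using GL_inv_apply[OF g] GL_apply_inv[OF g] by (auto simp: fun_eq_iff) metis
  also have "\<dots> b \<longleftrightarrow> (\<forall>a. g (dot_op T2 a b) = dot_op T1 (g a) (g b))" for b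
    unfolding tau_eq_dot_op using GL_add[OF g] by (auto simp: add.assoc)
  finally show ?thesis
    using conj_grp_eq_iff_tau[OF assms] by blast
qed

lemma codim3_nil2_product_dot_op:
  fixes T :: "('s::finite V \<Rightarrow> 's V) set"
  assumes "translation_group T" "vec.dim (weak_keys T) + 3 = CARD('s)"
  shows "codim3_nil2_product (dot_op T)"
  using alt_nil2_product_dot_op[OF assms(1)] assms(2) weak_keys_eq_radical[OF assms(1)]
  by (simp add: codim3_nil2_product_def codim3_nil2_product_axioms_def)

theorem theorem7:
  fixes T1 T2 :: "('s::finite V \<Rightarrow> 's V) set"
  assumes "translation_group T1" and "translation_group T2"
    and "vec.dim (weak_keys T1) + 3 = CARD('s)"
    and "vec.dim (weak_keys T2) + 3 = CARD('s)"
  shows "(\<exists>g\<in>GL. T2 = conj_grp g T1) \<longleftrightarrow>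
         vec.dim (error_space T1) = vec.dim (error_space T2)"
proof -
  have "(\<exists>g\<in>GL. T2 = conj_grp g T1) \<longleftrightarrow>
      (\<exists>g\<in>GL. \<forall>a b. g (dot_op T2 a b) = dot_op T1 (g a) (g b))"
    using conj_grp_iff_iso[OF assms(1,2)] by blast
  also have "\<dots> \<longleftrightarrow>
      vec.dim {dot_op T1 a b | a b. True} = vec.dim {dot_op T2 a b | a b. True}"
    using codim3_nil2_product_dot_op[OF assms(1,3)] codim3_nil2_product_dot_op[OF assms(2,4)]
    by (rule codim3_products_isomorphic_iff)
  finally show ?thesis
    unfolding error_space_def .
qed

end
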